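(* Let $\vec{s}(x,y)=(x,y,\zeta(x,y))^{\mathsf T}$ be a smooth Monge-patch surface, and fix an image point with slant $0\le\sigma<\pi/2$ at which the $3\times2$ Jacobian $\mathcal{D}\vec{n}$ of the unit normal field has full rank (equivalently, the Gaussian curvature $\kappa_G=\kappa_1\kappa_2$ is nonzero). Consider the Lambertian image model $I=\vec{l}^{\mathsf T}\vec{n}+\beta$, so that the image gradient satisfies $\nabla I^{\mathsf T}=\vec{l}^{\mathsf T}\mathcal{D}\vec{n}$, where the light source $\vec{l}\in\mathbb{R}^3$ is random. Let $\vec{l}_t=UU^{\mathsf T}\vec{l}$ be the projection of $\vec{l}$ onto the tangent plane (with $U$ a $3\times2$ matrix with orthonormal columns spanning the tangent plane), and suppose $\vec{l}_t$ has density $p_{\vec{l}_t}$ with respect to two-dimensional Lebesgue measure on the tangent plane. Then, conditioned on $\mathcal{D}\vec{n}$, the image gradient $\nabla I\in\mathbb{R}^2$ has density $$p_{\nabla I\mid\mathcal{D}\vec{n}}(\nabla I\mid\mathcal{D}\vec{n})=\frac{\cos\sigma}{|\kappa_G|}\,p_{\vec{l}_t}\!\left(\nabla I^{\mathsf T}\mathcal{D}\vec{n}^{+}\right).$$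
   Context: The unit normal is $\vec{n}=\frac{\vec{s}_x\times\vec{s}_y}{\|\vec{s}_x\times\vec{s}_y\|}$ as a function of image position $(x,y)$; $\mathcal{D}\vec{n}$ is its $3\times 2$ Jacobian. The principal curvatures $\kappa_1,\kappa_2$ are the eigenvalues of the differential of the Gauss map (shape operator), and $\kappa_G=\kappa_1\kappa_2$. Slant $\sigma$ is the angle between the normal and the viewing ($z$) axis. $\beta$ is a constant offset; albedo is 1. $\mathcal{D}\vec{n}^{+}$ is the Moore–Penrose pseudo-inverse, and $\nabla I^{\mathsf T}\mathcal{D}\vec{n}^{+}$ is a row vector lying in the tangent plane. *)

theory Defs
  imports "HOL-Probability.Probability"
begin

primrec Ck :: "nat \<Rightarrow> (real^2 \<Rightarrow> real) \<Rightarrow> bool" where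
  "Ck 0 f = True"
| "Ck (Suc k) f = ((\<forall>x. f differentiable (at x)) \<and>
                   (\<forall>v. Ck k (\<lambda>x. frechet_derivative f (at x) v)))"

definition smooth_fun :: "(real^2 \<Rightarrow> real) \<Rightarrow> bool" where
  "smooth_fun f \<longleftrightarrow> (\<forall>k. Ck k f)"

definition monge :: "(real^2 \<Rightarrow> real) \<Rightarrow> real^2 \<Rightarrow> real^3" where
  "monge \<zeta> w = vector [w$1, w$2, \<zeta> w]"

definition s_x :: "(real^2 \<Rightarrow> real) \<Rightarrow> real^2 \<Rightarrow> real^3" where
  "s_x \<zeta> w = frechet_derivative (monge \<zeta>) (at w) (axis 1 1)"

definition s_y :: "(real^2 \<Rightarrow> real) \<Rightarrow> real^2 \<Rightarrow> real^3" where
  "s_y \<zeta> w = frechet_derivative (monge \<zeta>) (at w) (axis 2 1)"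

definition unit_normal :: "(real^2 \<Rightarrow> real) \<Rightarrow> real^2 \<Rightarrow> real^3" where
  "unit_normal \<zeta> w = (1 / norm (cross3 (s_x \<zeta> w) (s_y \<zeta> w))) *\<^sub>R cross3 (s_x \<zeta> w) (s_y \<zeta> w)"

definition tangent_plane :: "(real^2 \<Rightarrow> real) \<Rightarrow> real^2 \<Rightarrow> (real^3) set" where
  "tangent_plane \<zeta> w = span {s_x \<zeta> w, s_y \<zeta> w}"

definition jac_normal :: "(real^2 \<Rightarrow> real) \<Rightarrow> real^2 \<Rightarrow> real^2^3" where
  "jac_normal \<zeta> w = matrix (frechet_derivative (unit_normal \<zeta>) (at w))"

definition jac_surf :: "(real^2 \<Rightarrow> real) \<Rightarrow> real^2 \<Rightarrow> real^2^3" where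
  "jac_surf \<zeta> w = matrix (frechet_derivative (monge \<zeta>) (at w))"

(* matrix of the differential of the Gauss map (shape operator) on the tangent
   plane, in the basis (s_x, s_y): Dn = [s_x s_y] W *)
definition shape_matrix :: "(real^2 \<Rightarrow> real) \<Rightarrow> real^2 \<Rightarrow> real^2^2" where
  "shape_matrix \<zeta> w = (THE W. jac_normal \<zeta> w = jac_surf \<zeta> w ** W)"

(* Gaussian curvature = kappa_1 * kappa_2 = product of the eigenvalues of the
   shape operator = its determinant *)
definition gauss_curvature :: "(real^2 \<Rightarrow> real) \<Rightarrow> real^2 \<Rightarrow> real" where
  "gauss_curvature \<zeta> w = det (shape_matrix \<zeta> w)"

definition slant :: "(real^2 \<Rightarrow> real) \<Rightarrow> real^2 \<Rightarrow> real" where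
  "slant \<zeta> w = arccos ((unit_normal \<zeta> w \<bullet> axis 3 1) /
                         (norm (unit_normal \<zeta> w) * norm (axis 3 1 :: real^3)))"

definition image :: "real^3 \<Rightarrow> real \<Rightarrow> (real^2 \<Rightarrow> real) \<Rightarrow> real^2 \<Rightarrow> real" where
  "image l \<beta> \<zeta> w = l \<bullet> unit_normal \<zeta> w + \<beta>"

definition image_grad :: "real^3 \<Rightarrow> real \<Rightarrow> (real^2 \<Rightarrow> real) \<Rightarrow> real^2 \<Rightarrow> real^2" where
  "image_grad l \<beta> \<zeta> w0 = (\<chi> i. frechet_derivative (image l \<beta> \<zeta>) (at w0) (axis i 1))"

definition is_pinv :: "real^'n^'m \<Rightarrow> real^'m^'n \<Rightarrow> bool" where
  "is_pinv A X \<longleftrightarrow> A ** X ** A = A \<and> X ** A ** X = X \<and>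
     transpose (A ** X) = A ** X \<and> transpose (X ** A) = X ** A"

definition pinv :: "real^'n^'m \<Rightarrow> real^'m^'n" where
  "pinv A = (THE X. is_pinv A X)"

definition plane_lebesgue :: "real^2^3 \<Rightarrow> (real^3) measure" where
  "plane_lebesgue U = distr (lborel :: (real^2) measure) borel (\<lambda>u. U *v u)"

end

theory Submission
  imports Defs
begin

text \<open>
  Since \<open>Dn\<close>
  maps into the tangent plane, \<open>Dn = U B\<close> with \<open>B = U\<^sup>T Dn\<close>, so \<open>\<nabla>I = B\<^sup>T (U\<^sup>T l)\<close> only sees the
  tangent coordinates \<open>U\<^sup>T l\<close> of the light, whose density is \<open>p\<^sub>l\<^sub>t\<close> read through \<open>U\<close>. Full rank
  of \<open>Dn\<close> makes \<open>B\<close> invertible, and the linear change of variables gives the density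
  \<open>p\<^sub>l\<^sub>t(U B\<^sup>-\<^sup>T \<nabla>I) / |det B|\<close>, where \<open>B\<^sup>-\<^sup>1 U\<^sup>T\<close> is the pseudo-inverse of \<open>Dn\<close>. For a Monge patch,
  \<open>Dn = [s\<^sub>x s\<^sub>y] W\<close> with \<open>det W = \<kappa>\<^sub>G\<close>, and \<open>|det (U\<^sup>T [s\<^sub>x s\<^sub>y])| = \<parallel>s\<^sub>x \<times> s\<^sub>y\<parallel> = 1 / cos \<sigma>\<close>.
\<close>

section \<open>Linear changes of variables of densities\<close>

lemma linear_borel_measurable [measurable]:
  fixes f :: "'b::euclidean_space \<Rightarrow> 'c::euclidean_space"
  assumes "linear f"
  shows "f \<in> borel_measurable borel"
  by (intro borel_measurable_continuous_onI linear_continuous_on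
      linear_conv_bounded_linear[THEN iffD1] assms)

lemma lborel_eq_density_distr_linear:
  fixes f :: "real^'n::{finite,wellorder} \<Rightarrow> real^'n::_"
  assumes f: "linear f" and det_f: "det (matrix f) \<noteq> 0"
  shows "lborel = density (distr lborel borel f) (\<lambda>_. ennreal \<bar>det (matrix f)\<bar>)"
proof (rule lborel_eqI)
  obtain g where g: "linear g" "\<And>x. g (f x) = x" "\<And>x. f (g x) = x"
    using f det_f det_nz_iff_inj linear_injective_isomorphism by metis
  have det_fg: "det (matrix f) * det (matrix g) = 1"
  proof -
    have "matrix f ** matrix g = matrix (f \<circ> g)" using matrix_compose[OF g(1) f] by simp
    also have "f \<circ> g = id" using g by auto
    finally show ?thesis by (metis det_I det_mul matrix_id_mat_1)
  qed
  have [measurable]: "f \<in> borel_measurable borel" using f by (rule linear_borel_measurable)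
  fix a b :: "real^'n::{finite,wellorder}" assume ab: "\<And>i. i \<in> Basis \<Longrightarrow> a \<bullet> i \<le> b \<bullet> i"
  have preimage: "f -` box a b = g ` box a b"
    using g(2,3) by (auto intro: rev_image_eqI)
  have "g ` box a b \<in> sets borel"
    unfolding preimage[symmetric] using measurable_sets_borel[of f borel] by simp
  then have "emeasure lborel (g ` box a b) = emeasure lebesgue (g ` box a b)" by simp
  also have "\<dots> = measure lebesgue (g ` box a b)"
    using measurable_linear_image[OF g(1)] by (simp add: emeasure_eq_measure2)
  also have "\<dots> = \<bar>det (matrix g)\<bar> * measure lebesgue (box a b)"
    using measure_linear_image[OF g(1), of "box a b"] by simp
  finally have "emeasure lborel (g ` box a b) = \<bar>det (matrix g)\<bar> * measure lebesgue (box a b)" .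
  then have "emeasure (density (distr lborel borel f) (\<lambda>_. ennreal \<bar>det (matrix f)\<bar>)) (box a b)
      = ennreal (\<bar>det (matrix f)\<bar> * (\<bar>det (matrix g)\<bar> * measure lebesgue (box a b)))"
    by (simp add: emeasure_density nn_integral_cmult_indicator emeasure_distr preimage ennreal_mult)
  also have "\<dots> = (\<Prod>i\<in>Basis. (b - a) \<bullet> i)"
    using det_fg ab by (simp add: abs_mult[symmetric] mult.assoc[symmetric] measure_lborel_box_eq)
  finally show "emeasure (density (distr lborel borel f) (\<lambda>_. ennreal \<bar>det (matrix f)\<bar>)) (box a b)
      = (\<Prod>i\<in>Basis. (b - a) \<bullet> i)" .
qed simp

lemma distributed_matrix_vector_mult:
  fixes Y :: "'a \<Rightarrow> real^'n::{finite,wellorder}" and L L' :: "real^'n::_^'n::_"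
  assumes Y: "distributed M lborel Y q"
    and inverse: "L ** L' = mat 1" "L' ** L = mat 1"
  shows "distributed M lborel (\<lambda>\<omega>. L *v Y \<omega>) (\<lambda>g. ennreal (1 / \<bar>det L\<bar>) * q (L' *v g))"
proof -
  have [measurable]: "Y \<in> borel_measurable M" "q \<in> borel_measurable lborel"
    and distr_Y: "distr M lborel Y = density lborel q"
    using Y by (auto simp: distributed_def)
  have [measurable]: "(\<lambda>x. L *v x) \<in> borel_measurable borel" "(\<lambda>x. L' *v x) \<in> borel_measurable borel"
    by (simp_all add: matrix_vector_mul_linear)
  have "det L' * det L = 1" by (metis det_I det_mul inverse(2))
  then have det_L': "det L' \<noteq> 0" "\<bar>det L'\<bar> = 1 / \<bar>det L\<bar>"
    by (auto simp: eq_divide_eq abs_mult[symmetric] mult.commute)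
  define c where "c = ennreal (1 / \<bar>det L\<bar>)"
  have "density lborel q = density (density (distr lborel borel (\<lambda>x. L' *v x)) (\<lambda>_. c)) q"
    using lborel_eq_density_distr_linear[OF matrix_vector_mul_linear, of L'] det_L'
    by (simp add: c_def)
  also have "\<dots> = distr (density lborel (\<lambda>g. c * q (L' *v g))) borel (\<lambda>x. L' *v x)"
    by (subst density_density_eq) (auto simp: density_distr)
  finally have distr_Y': "distr M lborel Y = distr (density lborel (\<lambda>g. c * q (L' *v g))) borel (\<lambda>x. L' *v x)"
    unfolding distr_Y .
  have "distr M lborel (\<lambda>\<omega>. L *v Y \<omega>) = distr (distr M lborel Y) lborel (\<lambda>x. L *v x)"
    by (subst distr_distr) (auto simp: o_def)
  also have "\<dots> = distr (density lborel (\<lambda>g. c * q (L' *v g))) lborel (\<lambda>g. g)"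
    unfolding distr_Y'
    by (subst distr_distr) (auto simp: o_def matrix_vector_mul_assoc inverse)
  also have "\<dots> = density lborel (\<lambda>g. c * q (L' *v g))" by (rule distr_id2) simp
  finally show ?thesis unfolding distributed_def c_def by auto
qed

lemma distributed_plane_lebesgue_coordinates:
  fixes U :: "real^2^3" and X :: "'a \<Rightarrow> real^3"
  assumes U: "transpose U ** U = mat 1" and [measurable]: "X \<in> borel_measurable M"
    and X: "distributed M (plane_lebesgue U) (\<lambda>\<omega>. U *v (transpose U *v X \<omega>)) p"
  shows "distributed M lborel (\<lambda>\<omega>. transpose U *v X \<omega>) (\<lambda>a. p (U *v a))"
proof -
  have sets_plane: "sets (plane_lebesgue U) = sets borel" by (simp add: plane_lebesgue_def)
  have [measurable]: "p \<in> borel_measurable borel"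
    using X sets_plane by (auto simp: distributed_def cong: measurable_cong_sets)
  have [measurable]: "(\<lambda>u. U *v u) \<in> borel_measurable borel"
    "(\<lambda>u. transpose U *v u) \<in> borel_measurable borel"
    by (simp_all add: matrix_vector_mul_linear del: transpose_matrix_vector)
  have coord_inverse: "\<And>a. transpose U *v (U *v a) = a"
    by (simp add: matrix_vector_mul_assoc U del: transpose_matrix_vector)
  have "distr M borel (\<lambda>\<omega>. U *v (transpose U *v X \<omega>)) = density (plane_lebesgue U) p"
    using X sets_plane by (metis distributed_distr_eq_density distr_cong)
  also have "\<dots> = distr (density lborel (\<lambda>a. p (U *v a))) borel (\<lambda>u. U *v u)"
    unfolding plane_lebesgue_def by (subst density_distr) auto
  finally have distr_X: "distr M borel (\<lambda>\<omega>. U *v (transpose U *v X \<omega>))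
      = distr (density lborel (\<lambda>a. p (U *v a))) borel (\<lambda>u. U *v u)" .
  have "distr M lborel (\<lambda>\<omega>. transpose U *v X \<omega>)
      = distr (distr M borel (\<lambda>\<omega>. U *v (transpose U *v X \<omega>))) lborel (\<lambda>u. transpose U *v u)"
    by (subst distr_distr) (auto simp: o_def coord_inverse simp del: transpose_matrix_vector)
  also have "\<dots> = distr (density lborel (\<lambda>a. p (U *v a))) lborel (\<lambda>a. a)"
    unfolding distr_X
    by (subst distr_distr) (auto simp: o_def coord_inverse simp del: transpose_matrix_vector)
  also have "\<dots> = density lborel (\<lambda>a. p (U *v a))" by (rule distr_id2) simp
  finally show ?thesis unfolding distributed_def by (auto simp del: transpose_matrix_vector)
qed

section \<open>Pseudo-inverses of maps into a plane\<close>

lemma is_pinv_unique: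
  fixes A :: "real^'n^'m"
  assumes X: "is_pinv A X" and Y: "is_pinv A Y"
  shows "X = Y"
proof -
  from X have x1: "A ** X ** A = A" and x2: "X ** A ** X = X"
    and x3: "transpose (A ** X) = A ** X" and x4: "transpose (X ** A) = X ** A"
    by (auto simp: is_pinv_def)
  from Y have y1: "A ** Y ** A = A" and y2: "Y ** A ** Y = Y"
    and y3: "transpose (A ** Y) = A ** Y" and y4: "transpose (Y ** A) = Y ** A"
    by (auto simp: is_pinv_def)
  have "X = X ** transpose (A ** X)" by (metis x2 x3 matrix_mul_assoc)
  also have "\<dots> = X ** transpose X ** transpose (A ** Y ** A)"
    by (simp add: y1 matrix_transpose_mul matrix_mul_assoc)
  also have "\<dots> = X ** transpose (A ** X) ** transpose (A ** Y)"
    by (simp add: matrix_transpose_mul matrix_mul_assoc)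
  also have "\<dots> = X ** A ** Y" by (metis x2 x3 y3 y2 x1 matrix_mul_assoc)
  finally have X_eq: "X = X ** A ** Y" .
  have "Y = transpose (Y ** A) ** Y" by (metis y2 y4)
  also have "\<dots> = transpose (A ** X ** A) ** transpose Y ** Y"
    by (simp add: x1 matrix_transpose_mul)
  also have "\<dots> = transpose (X ** A) ** transpose (Y ** A) ** Y"
    by (simp add: matrix_transpose_mul matrix_mul_assoc)
  also have "\<dots> = X ** A ** Y" by (metis x4 y4 y2 matrix_mul_assoc)
  finally show ?thesis using X_eq by simp
qed

lemma pinv_orthonormal_mult:
  fixes U :: "real^'k^'m" and B B' :: "real^'k^'k"
  assumes U: "transpose U ** U = mat 1" and B: "B ** B' = mat 1" "B' ** B = mat 1"
  shows "pinv (U ** B) = B' ** transpose U"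
  unfolding pinv_def
proof (rule the_equality)
  have AX: "U ** B ** (B' ** transpose U) = U ** transpose U"
    by (metis B(1) matrix_mul_assoc matrix_mul_rid)
  have XA: "B' ** transpose U ** (U ** B) = mat 1"
    by (metis U B(2) matrix_mul_assoc matrix_mul_rid)
  show "is_pinv (U ** B) (B' ** transpose U)"
    unfolding is_pinv_def
    by (simp add: AX XA matrix_transpose_mul)
      (metis U matrix_mul_assoc matrix_mul_lid)
  then show "\<And>X. is_pinv (U ** B) X \<Longrightarrow> X = B' ** transpose U"
    using is_pinv_unique by blast
qed

lemma matrix_mul_orthonormal_projection:
  fixes U :: "real^'k^'m" and A :: "real^'n^'m"
  assumes U: "transpose U ** U = mat 1" and range_A: "\<And>v. A *v v \<in> range (\<lambda>u. U *v u)"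
  shows "U ** (transpose U ** A) = A"
proof (rule matrix_eq[THEN iffD2], rule allI)
  fix v
  obtain y where y: "A *v v = U *v y" using range_A[of v] by auto
  have "U ** (transpose U ** A) *v v = U *v (transpose U *v (A *v v))"
    by (simp add: matrix_vector_mul_assoc del: transpose_matrix_vector)
  also have "\<dots> = A *v v"
    unfolding y by (simp add: matrix_vector_mul_assoc U del: transpose_matrix_vector)
  finally show "U ** (transpose U ** A) *v v = A *v v" .
qed

lemma distributed_vector_matrix_mult_rank2:
  fixes U D :: "real^2^3" and X :: "'a \<Rightarrow> real^3"
  assumes U: "transpose U ** U = mat 1" and range_D: "\<And>v. D *v v \<in> range (\<lambda>u. U *v u)"
    and rank_D: "rank D = 2" and [measurable]: "X \<in> borel_measurable M"
    and X: "distributed M (plane_lebesgue U) (\<lambda>\<omega>. U *v (transpose U *v X \<omega>)) p"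
  shows "distributed M lborel (\<lambda>\<omega>. X \<omega> v* D)
           (\<lambda>g. ennreal (1 / \<bar>det (transpose U ** D)\<bar>) * p (g v* pinv D))"
proof -
  define B where "B = transpose U ** D"
  have D_eq: "D = U ** B"
    unfolding B_def using matrix_mul_orthonormal_projection[OF U range_D] by simp
  have "rank D \<le> rank B" unfolding D_eq by (rule rank_mul_le_right)
  then have "det B \<noteq> 0" using rank_D det_eq_0_rank[of B] by simp
  then obtain B' where B': "B ** B' = mat 1" "B' ** B = mat 1"
    using invertible_det_nz invertible_def by metis
  have "distributed M lborel (\<lambda>\<omega>. transpose B *v (transpose U *v X \<omega>))
      (\<lambda>g. ennreal (1 / \<bar>det (transpose B)\<bar>) * p (U *v (transpose B' *v g)))"
    by (rule distributed_matrix_vector_mult[OF distributed_plane_lebesgue_coordinates[OF U _ X]])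
      (simp_all del: transpose_matrix_vector add: matrix_transpose_mul[symmetric] B')
  moreover have "\<And>\<omega>. transpose B *v (transpose U *v X \<omega>) = X \<omega> v* D"
    by (simp add: D_eq vector_matrix_mul_assoc)
  moreover have "\<And>g. U *v (transpose B' *v g) = g v* pinv D"
    by (simp add: D_eq pinv_orthonormal_mult[OF U B'] vector_matrix_mul_assoc[symmetric])
  ultimately show ?thesis by (simp add: B_def)
qed

section \<open>Differential geometry of a Monge patch\<close>

definition zeta_x :: "(real^2 \<Rightarrow> real) \<Rightarrow> real^2 \<Rightarrow> real" where
  "zeta_x \<zeta> w = frechet_derivative \<zeta> (at w) (axis 1 1)"

definition zeta_y :: "(real^2 \<Rightarrow> real) \<Rightarrow> real^2 \<Rightarrow> real" where
  "zeta_y \<zeta> w = frechet_derivative \<zeta> (at w) (axis 2 1)"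

definition area_factor :: "(real^2 \<Rightarrow> real) \<Rightarrow> real^2 \<Rightarrow> real" where
  "area_factor \<zeta> w = sqrt ((zeta_x \<zeta> w)\<^sup>2 + (zeta_y \<zeta> w)\<^sup>2 + 1)"

lemma area_factor_ge_1: "area_factor \<zeta> w \<ge> 1"
  unfolding area_factor_def by (simp add: real_le_rsqrt)

lemma smooth_fun_differentiable:
  assumes "smooth_fun \<zeta>"
  shows "\<zeta> differentiable (at w)" "zeta_x \<zeta> differentiable (at w)" "zeta_y \<zeta> differentiable (at w)"
proof -
  have "Ck 2 \<zeta>" using assms smooth_fun_def by blast
  then have "\<forall>x. \<zeta> differentiable (at x)"
    and "\<forall>v x. (\<lambda>x. frechet_derivative \<zeta> (at x) v) differentiable (at x)"
    by (simp_all add: numeral_2_eq_2)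
  then show "\<zeta> differentiable (at w)" "zeta_x \<zeta> differentiable (at w)" "zeta_y \<zeta> differentiable (at w)"
    unfolding zeta_x_def[abs_def] zeta_y_def[abs_def] by blast+
qed

lemma vector_3_eq_axis_sum:
  "vector [a, b, c] = a *\<^sub>R axis 1 1 + b *\<^sub>R axis 2 1 + c *\<^sub>R (axis 3 1 :: real^3)"
  by (simp add: vec_eq_iff forall_3 axis_def)

lemma frechet_derivative_zeta:
  assumes "\<zeta> differentiable (at w)"
  shows "frechet_derivative \<zeta> (at w) h = zeta_x \<zeta> w * h$1 + zeta_y \<zeta> w * h$2"
proof -
  have "linear (frechet_derivative \<zeta> (at w))"
    using assms frechet_derivative_works has_derivative_linear by blast
  then have "frechet_derivative \<zeta> (at w) (h$1 *\<^sub>R axis 1 1 + h$2 *\<^sub>R axis 2 1)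
      = h$1 * zeta_x \<zeta> w + h$2 * zeta_y \<zeta> w"
    by (simp add: linear_add linear_scale zeta_x_def zeta_y_def)
  moreover have "h$1 *\<^sub>R axis 1 1 + h$2 *\<^sub>R axis 2 1 = h"
    by (simp add: vec_eq_iff forall_2 axis_def)
  ultimately show ?thesis by (simp add: mult.commute)
qed

lemma has_derivative_monge:
  assumes "\<zeta> differentiable (at w)"
  shows "(monge \<zeta> has_derivative
           (\<lambda>h. vector [h$1, h$2, zeta_x \<zeta> w * h$1 + zeta_y \<zeta> w * h$2])) (at w)"
proof -
  have "monge \<zeta> = (\<lambda>w. (w$1) *\<^sub>R axis 1 1 + (w$2) *\<^sub>R axis 2 1 + \<zeta> w *\<^sub>R (axis 3 1 :: real^3))"
    by (simp add: monge_def[abs_def] vector_3_eq_axis_sum)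
  moreover have "(\<zeta> has_derivative frechet_derivative \<zeta> (at w)) (at w)"
    using assms frechet_derivative_works by blast
  then have "((\<lambda>w. (w$1) *\<^sub>R axis 1 1 + (w$2) *\<^sub>R axis 2 1 + \<zeta> w *\<^sub>R (axis 3 1 :: real^3))
      has_derivative (\<lambda>h. (h$1) *\<^sub>R axis 1 1 + (h$2) *\<^sub>R axis 2 1
                          + frechet_derivative \<zeta> (at w) h *\<^sub>R (axis 3 1 :: real^3))) (at w)"
    by (intro derivative_eq_intros)
      (auto intro!: bounded_linear_imp_has_derivative bounded_linear_vec_nth)
  ultimately show ?thesis
    by (simp add: vector_3_eq_axis_sum frechet_derivative_zeta[OF assms])
qed

lemma frechet_derivative_monge:
  assumes "\<zeta> differentiable (at w)"
  shows "frechet_derivative (monge \<zeta>) (at w)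
           = (\<lambda>h. vector [h$1, h$2, zeta_x \<zeta> w * h$1 + zeta_y \<zeta> w * h$2])"
  by (rule frechet_derivative_at[OF has_derivative_monge[OF assms], symmetric])

lemma s_x_s_y_eq:
  assumes "\<zeta> differentiable (at w)"
  shows "s_x \<zeta> w = vector [1, 0, zeta_x \<zeta> w]" "s_y \<zeta> w = vector [0, 1, zeta_y \<zeta> w]"
  by (simp_all add: s_x_def s_y_def frechet_derivative_monge[OF assms] axis_def)

lemma unit_normal_eq:
  assumes "\<zeta> differentiable (at w)"
  shows "unit_normal \<zeta> w = (1 / area_factor \<zeta> w) *\<^sub>R vector [- zeta_x \<zeta> w, - zeta_y \<zeta> w, 1]"
proof -
  have "cross3 (s_x \<zeta> w) (s_y \<zeta> w) = vector [- zeta_x \<zeta> w, - zeta_y \<zeta> w, 1]"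
    using s_x_s_y_eq[OF assms] by (simp add: cross3_simps)
  moreover have "norm (vector [a, b, c] :: real^3) = sqrt (a\<^sup>2 + b\<^sup>2 + c\<^sup>2)" for a b c
    by (simp add: norm_eq_sqrt_inner inner_vec_def sum_3 power2_eq_square)
  ultimately show ?thesis
    unfolding unit_normal_def area_factor_def by (simp add: add.commute add.left_commute)
qed

lemma unit_normal_differentiable:
  assumes "smooth_fun \<zeta>"
  shows "unit_normal \<zeta> differentiable (at w)"
proof -
  note zeta = smooth_fun_differentiable[OF assms]
  have pos: "0 < (zeta_x \<zeta> w)\<^sup>2 + (zeta_y \<zeta> w)\<^sup>2 + 1" by (simp add: add_nonneg_pos)
  have "(\<lambda>w. (zeta_x \<zeta> w)\<^sup>2 + (zeta_y \<zeta> w)\<^sup>2 + 1) differentiable (at w)"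
    by (intro derivative_intros zeta)
  then obtain G where G: "((\<lambda>w. (zeta_x \<zeta> w)\<^sup>2 + (zeta_y \<zeta> w)\<^sup>2 + 1) has_derivative G) (at w)"
    using differentiable_def by blast
  have area: "area_factor \<zeta> differentiable (at w)"
    unfolding area_factor_def[abs_def] by (rule differentiableI[OF has_derivative_real_sqrt[OF pos G]])
  have "unit_normal \<zeta> = (\<lambda>w. (1 / area_factor \<zeta> w) *\<^sub>R
      ((- zeta_x \<zeta> w) *\<^sub>R axis 1 1 + (- zeta_y \<zeta> w) *\<^sub>R axis 2 1 + (1::real) *\<^sub>R (axis 3 1 :: real^3)))"
    by (rule ext) (simp only: unit_normal_eq[OF zeta(1)] vector_3_eq_axis_sum)
  moreover have "area_factor \<zeta> w \<noteq> 0" using area_factor_ge_1[of \<zeta> w] by simp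
  ultimately show ?thesis by (simp only:) (intro derivative_intros area zeta)
qed

lemma unit_normal_inner_self:
  assumes "\<zeta> differentiable (at w)"
  shows "unit_normal \<zeta> w \<bullet> unit_normal \<zeta> w = 1"
proof -
  have pos: "0 < (zeta_x \<zeta> w)\<^sup>2 + (zeta_y \<zeta> w)\<^sup>2 + 1" by (simp add: add_nonneg_pos)
  have "unit_normal \<zeta> w \<bullet> unit_normal \<zeta> w
      = (1 / area_factor \<zeta> w)\<^sup>2 * ((zeta_x \<zeta> w)\<^sup>2 + (zeta_y \<zeta> w)\<^sup>2 + 1)"
    unfolding unit_normal_eq[OF assms] by (simp add: inner_vec_def sum_3 power2_eq_square algebra_simps)
  also have "\<dots> = 1" unfolding area_factor_def using pos by (simp add: power_divide)
  finally show ?thesis .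
qed

lemma unit_normal_orthogonal_derivative:
  assumes "smooth_fun \<zeta>"
  shows "unit_normal \<zeta> w \<bullet> frechet_derivative (unit_normal \<zeta>) (at w) h = 0"
proof -
  let ?n = "unit_normal \<zeta>" and ?D = "frechet_derivative (unit_normal \<zeta>) (at w)"
  have D: "(?n has_derivative ?D) (at w)"
    using unit_normal_differentiable[OF assms] frechet_derivative_works by blast
  have "((\<lambda>w. ?n w \<bullet> ?n w) has_derivative (\<lambda>h. ?n w \<bullet> ?D h + ?D h \<bullet> ?n w)) (at w)"
    by (rule has_derivative_inner[OF D D])
  moreover have "((\<lambda>w. ?n w \<bullet> ?n w) has_derivative (\<lambda>h. 0)) (at w)"
    using unit_normal_inner_self[OF smooth_fun_differentiable(1)[OF assms]] by simp
  ultimately have "(\<lambda>h. ?n w \<bullet> ?D h + ?D h \<bullet> ?n w) = (\<lambda>h. 0)" by (rule has_derivative_unique)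
  then have "?n w \<bullet> ?D h + ?D h \<bullet> ?n w = 0" by metis
  then show ?thesis by (simp add: inner_commute)
qed

lemma orthogonal_unit_normal_third:
  assumes "\<zeta> differentiable (at w)" and "unit_normal \<zeta> w \<bullet> c = 0"
  shows "c$3 = zeta_x \<zeta> w * c$1 + zeta_y \<zeta> w * c$2"
proof -
  have "area_factor \<zeta> w > 0" using area_factor_ge_1[of \<zeta> w] by simp
  moreover have "(1 / area_factor \<zeta> w) * (- zeta_x \<zeta> w * c$1 - zeta_y \<zeta> w * c$2 + c$3) = 0"
    using assms(2) unfolding unit_normal_eq[OF assms(1)]
    by (simp add: inner_vec_def sum_3 algebra_simps)
  ultimately show ?thesis by simp
qed

lemma in_tangent_plane:
  assumes "\<zeta> differentiable (at w)" and "c$3 = zeta_x \<zeta> w * c$1 + zeta_y \<zeta> w * c$2"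
  shows "c \<in> tangent_plane \<zeta> w"
proof -
  have "c = c$1 *\<^sub>R s_x \<zeta> w + c$2 *\<^sub>R s_y \<zeta> w"
    using assms(2) s_x_s_y_eq[OF assms(1)] by (simp add: vec_eq_iff forall_3)
  also have "\<dots> \<in> tangent_plane \<zeta> w"
    unfolding tangent_plane_def by (intro span_add span_mul span_base) auto
  finally show ?thesis .
qed

lemma jac_normal_mult:
  assumes "smooth_fun \<zeta>"
  shows "jac_normal \<zeta> w *v h = frechet_derivative (unit_normal \<zeta>) (at w) h"
proof -
  have "linear (frechet_derivative (unit_normal \<zeta>) (at w))"
    using unit_normal_differentiable[OF assms] frechet_derivative_works has_derivative_linear by blast
  then show ?thesis unfolding jac_normal_def by (metis matrix_vector_mul(2))
qed

lemma jac_normal_mult_third: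
  assumes "smooth_fun \<zeta>"
  shows "(jac_normal \<zeta> w *v h)$3
           = zeta_x \<zeta> w * (jac_normal \<zeta> w *v h)$1 + zeta_y \<zeta> w * (jac_normal \<zeta> w *v h)$2"
  using orthogonal_unit_normal_third smooth_fun_differentiable(1)[OF assms]
    unit_normal_orthogonal_derivative[OF assms] jac_normal_mult[OF assms]
  by metis

lemma jac_normal_mult_in_tangent_plane:
  assumes "smooth_fun \<zeta>"
  shows "jac_normal \<zeta> w *v h \<in> tangent_plane \<zeta> w"
  using in_tangent_plane[OF smooth_fun_differentiable(1)[OF assms] jac_normal_mult_third[OF assms]] .

lemma image_grad_eq:
  assumes "smooth_fun \<zeta>"
  shows "image_grad l \<beta> \<zeta> w = l v* jac_normal \<zeta> w"
proof -
  let ?D = "frechet_derivative (unit_normal \<zeta>) (at w)"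
  have "(unit_normal \<zeta> has_derivative ?D) (at w)"
    using unit_normal_differentiable[OF assms] frechet_derivative_works by blast
  then have "(image l \<beta> \<zeta> has_derivative (\<lambda>h. l \<bullet> ?D h)) (at w)"
    unfolding image_def[abs_def] by (auto intro!: derivative_eq_intros)
  then have "frechet_derivative (image l \<beta> \<zeta>) (at w) = (\<lambda>h. l \<bullet> (jac_normal \<zeta> w *v h))"
    by (simp add: frechet_derivative_at[symmetric] jac_normal_mult[OF assms])
  then show ?thesis
    by (simp add: vec_eq_iff image_grad_def matrix_vector_mult_basis column_def
        inner_vec_def vector_matrix_mult_def mult.commute)
qed

lemma jac_surf_mult:
  assumes "\<zeta> differentiable (at w)"
  shows "jac_surf \<zeta> w *v h = vector [h$1, h$2, zeta_x \<zeta> w * h$1 + zeta_y \<zeta> w * h$2]"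
proof -
  have "linear (\<lambda>h::real^2. vector [h$1, h$2, zeta_x \<zeta> w * h$1 + zeta_y \<zeta> w * h$2] :: real^3)"
    using has_derivative_linear[OF has_derivative_monge[OF assms]] .
  then show ?thesis
    unfolding jac_surf_def frechet_derivative_monge[OF assms]
    using fun_cong[OF matrix_vector_mul(2), of _ h] by simp
qed

text \<open>
  \<open>Dn\<close> maps into the tangent plane, and tangent vectors of a Monge patch are determined by
  their first two coordinates.
\<close>

lemma shape_matrix_eq_upper_block:
  assumes "smooth_fun \<zeta>"
  shows "shape_matrix \<zeta> w = (\<chi> i j. jac_normal \<zeta> w $ (if i = 1 then 1 else 2) $ j)"
    and "jac_normal \<zeta> w = jac_surf \<zeta> w ** shape_matrix \<zeta> w"
proof -
  define W :: "real^2^2" where "W = (\<chi> i j. jac_normal \<zeta> w $ (if i = 1 then 1 else 2) $ j)"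
  note J = jac_surf_mult[OF smooth_fun_differentiable(1)[OF assms]]
  have W: "(W *v h)$1 = (jac_normal \<zeta> w *v h)$1" "(W *v h)$2 = (jac_normal \<zeta> w *v h)$2" for h
    by (simp_all add: W_def matrix_vector_mult_def)
  have JW: "jac_normal \<zeta> w = jac_surf \<zeta> w ** W"
  proof (rule matrix_eq[THEN iffD2], rule allI)
    fix h
    show "jac_normal \<zeta> w *v h = jac_surf \<zeta> w ** W *v h"
      unfolding matrix_vector_mul_assoc[symmetric] J W
      using jac_normal_mult_third[OF assms, of w h] by (simp add: vec_eq_iff forall_3)
  qed
  have shape: "shape_matrix \<zeta> w = W"
    unfolding shape_matrix_def
  proof (rule the_equality)
    fix W' assume "jac_normal \<zeta> w = jac_surf \<zeta> w ** W'"
    show "W' = W"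
    proof (rule matrix_eq[THEN iffD2], rule allI)
      fix h
      have "jac_surf \<zeta> w *v (W' *v h) = jac_surf \<zeta> w *v (W *v h)"
        using \<open>jac_normal \<zeta> w = jac_surf \<zeta> w ** W'\<close> JW by (simp add: matrix_vector_mul_assoc)
      then have "(jac_surf \<zeta> w *v (W' *v h))$1 = (jac_surf \<zeta> w *v (W *v h))$1"
        "(jac_surf \<zeta> w *v (W' *v h))$2 = (jac_surf \<zeta> w *v (W *v h))$2" by simp_all
      then show "W' *v h = W *v h" unfolding J by (simp add: vec_eq_iff forall_2)
    qed
  qed (rule JW)
  then show "shape_matrix \<zeta> w = (\<chi> i j. jac_normal \<zeta> w $ (if i = 1 then 1 else 2) $ j)"
    by (simp only: W_def)
  show "jac_normal \<zeta> w = jac_surf \<zeta> w ** shape_matrix \<zeta> w"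
    using JW shape by (simp only:)
qed

lemma abs_det_tangent_coordinates_jac_surf:
  assumes "\<zeta> differentiable (at w)" and U: "transpose U ** U = mat 1"
    and U_range: "range (\<lambda>u. U *v u) = tangent_plane \<zeta> w"
  shows "\<bar>det (transpose U ** jac_surf \<zeta> w)\<bar> = area_factor \<zeta> w"
proof -
  let ?J = "jac_surf \<zeta> w" and ?a = "zeta_x \<zeta> w" and ?b = "zeta_y \<zeta> w"
  let ?C = "transpose U ** ?J"
  have J_entry: "?J $ k $ j = (?J *v axis j 1) $ k" for k j
    by (simp add: matrix_vector_mult_basis column_def)
  have UJ: "U ** ?C = ?J"
  proof (rule matrix_mul_orthonormal_projection[OF U])
    fix h show "?J *v h \<in> range (\<lambda>u. U *v u)"
      unfolding U_range by (rule in_tangent_plane[OF assms(1)]) (simp add: jac_surf_mult[OF assms(1)])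
  qed
  have "(det ?C)\<^sup>2 = det (transpose ?C ** ?C)" by (simp add: det_mul power2_eq_square)
  also have "transpose ?C ** ?C = transpose ?J ** ?J"
    by (metis UJ matrix_transpose_mul matrix_mul_assoc)
  also have "det (transpose ?J ** ?J) = (1 + ?a\<^sup>2) * (1 + ?b\<^sup>2) - (?a * ?b) * (?a * ?b)"
    by (simp add: det_2 matrix_matrix_mult_def transpose_def sum_3 J_entry
        jac_surf_mult[OF assms(1)] axis_def power2_eq_square)
  also have "\<dots> = (area_factor \<zeta> w)\<^sup>2"
    unfolding area_factor_def by (simp add: power2_eq_square algebra_simps)
  finally show ?thesis
    using area_factor_ge_1[of \<zeta> w] by (metis abs_of_nonneg order_trans zero_le_one power2_abs
        power2_eq_iff_nonneg abs_ge_zero)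
qed

lemma cos_slant_eq:
  assumes "\<zeta> differentiable (at w)"
  shows "cos (slant \<zeta> w) = 1 / area_factor \<zeta> w"
proof -
  have "norm (unit_normal \<zeta> w) = 1"
    by (simp add: norm_eq_sqrt_inner unit_normal_inner_self[OF assms])
  moreover have "unit_normal \<zeta> w \<bullet> axis 3 1 = 1 / area_factor \<zeta> w"
    unfolding unit_normal_eq[OF assms] by (simp add: inner_axis)
  moreover have "- 1 \<le> 1 / area_factor \<zeta> w" "1 / area_factor \<zeta> w \<le> 1"
    using area_factor_ge_1[of \<zeta> w] by (auto simp: order_trans[of _ 0])
  ultimately show ?thesis unfolding slant_def by (simp add: cos_arccos)
qed

text \<open>
  The slant bounds hold for every Monge patch, and \<open>M\<close> need not be a probability space.
\<close>

theorem mainTheorem2: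
  fixes \<zeta> :: "real^2 \<Rightarrow> real" and w0 :: "real^2" and \<beta> :: real
    and M :: "'a measure" and l :: "'a \<Rightarrow> real^3"
    and U :: "real^2^3" and p :: "real^3 \<Rightarrow> ennreal"
  assumes "smooth_fun \<zeta>"
    and "0 \<le> slant \<zeta> w0" and "slant \<zeta> w0 < pi / 2"
    and "rank (jac_normal \<zeta> w0) = 2"
    and "prob_space M" and "l \<in> borel_measurable M"
    and "transpose U ** U = mat 1"
    and "range (\<lambda>u. U *v u) = tangent_plane \<zeta> w0"
    and "distributed M (plane_lebesgue U) (\<lambda>\<omega>. U *v (transpose U *v l \<omega>)) p"
  shows "distributed M lborel (\<lambda>\<omega>. image_grad (l \<omega>) \<beta> \<zeta> w0)
           (\<lambda>g. ennreal (cos (slant \<zeta> w0) / \<bar>gauss_curvature \<zeta> w0\<bar>)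
                 * p (g v* pinv (jac_normal \<zeta> w0)))"
proof -
  note smooth = assms(1) and U = assms(7) and U_range = assms(8)
  note differentiable = smooth_fun_differentiable(1)[OF smooth]
  have "det (transpose U ** jac_normal \<zeta> w0)
      = det (transpose U ** jac_surf \<zeta> w0) * gauss_curvature \<zeta> w0"
    unfolding gauss_curvature_def
    by (subst shape_matrix_eq_upper_block(2)[OF smooth]) (simp add: matrix_mul_assoc det_mul)
  then have "1 / \<bar>det (transpose U ** jac_normal \<zeta> w0)\<bar>
      = cos (slant \<zeta> w0) / \<bar>gauss_curvature \<zeta> w0\<bar>"
    by (simp add: abs_mult abs_det_tangent_coordinates_jac_surf[OF differentiable U U_range]
        cos_slant_eq[OF differentiable])
  moreover have "distributed M lborel (\<lambda>\<omega>. l \<omega> v* jac_normal \<zeta> w0)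
      (\<lambda>g. ennreal (1 / \<bar>det (transpose U ** jac_normal \<zeta> w0)\<bar>) * p (g v* pinv (jac_normal \<zeta> w0)))"
    using U_range jac_normal_mult_in_tangent_plane[OF smooth]
    by (intro distributed_vector_matrix_mult_rank2[OF U _ assms(4,6,9)]) auto
  ultimately show ?thesis by (simp add: image_grad_eq[OF smooth])
qed

end
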